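(* Let $\varphi\colon \mathbb{C}^*\times\mathbb{C}^n\to\mathbb{C}^n$ be a holomorphic action of $\mathbb{C}^*$ on $\mathbb{C}^n$ having $p\in\mathbb{C}^n$ as a fixed point, and let $\psi\colon\mathbb{C}^*\times\mathbb{C}^n\to\mathbb{C}^n$ be the action by linear transformations defined by the derivative of $\varphi$ at $p$, i.e. $\psi^z(x)=D\varphi^z(p)\cdot x$. Then there is an entire (holomorphic on all of $\mathbb{C}^n$) map $F\colon\mathbb{C}^n\to\mathbb{C}^n$ such that $F(p)=0$ and $$\psi^z\circ F\equiv F\circ\varphi^z\quad\text{for each } z\in\mathbb{C}^*.$$ Moreover, there is a $\varphi$-invariant open set $W\ni p$ in $\mathbb{C}^n$ such that $F|_W\colon W\to F(W)$ is a biholomorphism.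
   Context: A holomorphic action of $\mathbb{C}^*$ on a complex manifold $M$ is a holomorphic map $\varphi\colon\mathbb{C}^*\times M\to M$ with $\varphi(1,x)=x$ and $\varphi(zw,x)=\varphi(z,\varphi(w,x))$. For $z\in\mathbb{C}^*$ write $\varphi^z=\varphi(z,\cdot)$. A fixed point $p$ satisfies $\varphi^z(p)=p$ for all $z$. Here $D\varphi^z(p)$ is the complex derivative (Jacobian matrix) of $\varphi^z$ at $p$, and $\psi^z=\psi(z,\cdot)$. *)

theory Defs
  imports "HOL-Analysis.Analysis"
begin

text \<open>Holomorphic maps between open subsets of complex coordinate spaces, modelled as
  real-Frechet-differentiable maps whose derivative at every point is complex-linear.\<close>

definition holo_vec :: "(complex^'n) set \<Rightarrow> (complex^'n \<Rightarrow> complex^'m) \<Rightarrow> bool" where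
  "holo_vec S f \<longleftrightarrow>
     (\<forall>x\<in>S. \<exists>L. (f has_derivative L) (at x) \<and> (\<forall>(c::complex) v. L (c *s v) = c *s L v))"

definition holo_prod :: "(complex \<times> (complex^'n)) set \<Rightarrow> (complex \<times> (complex^'n) \<Rightarrow> complex^'m) \<Rightarrow> bool" where
  "holo_prod S f \<longleftrightarrow>
     (\<forall>q\<in>S. \<exists>L. (f has_derivative L) (at q) \<and>
        (\<forall>(c::complex) a v. L (c * a, c *s v) = c *s L (a, v)))"

definition holo_Cstar_action :: "(complex \<Rightarrow> complex^'n \<Rightarrow> complex^'n) \<Rightarrow> bool" where
  "holo_Cstar_action \<phi> \<longleftrightarrow>
     holo_prod ((- {0}) \<times> UNIV) (\<lambda>(z, x). \<phi> z x) \<and>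
     (\<forall>x. \<phi> 1 x = x) \<and>
     (\<forall>z w x. z \<noteq> 0 \<longrightarrow> w \<noteq> 0 \<longrightarrow> \<phi> (z * w) x = \<phi> z (\<phi> w x))"

end

(*
  Bochner's linearization trick, averaging over the compact subgroup S^1 of C^*. With
  e(t) = exp(2 pi i t) and psi_z = D(phi_z)(p), the map
    F x = integral_0^1 psi_(e(-t)) (phi_(e(t)) x - p) dt
  is entire with F p = 0 and DF(p) = id. Invariance of the integral under shifts of t gives
  psi_w o F = F o phi_w for |w| = 1; both sides are holomorphic in w on C^*, so the identity
  theorem gives it for every w. Let g invert F near p (inverse function theorem), let P be a
  polydisc around 0 inside the domain of g, V the set of v with psi_w v in P for all |w| = 1,
  U the points near p mapped into V, and W = C^* . U. By the maximum modulus principle on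
  annuli, {c : psi_c v in V} is a connected union of circles; along it phi_c y = g (psi_c (F y)),
  by a clopen argument. Hence F is injective on W, and its inverse on F(W) is locally
  phi_c o g o psi_(1/c). The partial derivatives of phi are holomorphic and jointly continuous
  because the Cauchy integral formula writes them as parameter integrals of phi.
*)

theory Submission
  imports Defs "HOL-Complex_Analysis.Complex_Analysis"
begin

unbundle no fps_syntax

section \<open>Vector-valued holomorphic maps and parameter integrals\<close>

lemma bounded_linear_vector_scalar_mult_right:
  "bounded_linear (\<lambda>y::complex^'n. c *s y)"
proof -
  have "linear (\<lambda>y::complex^'n. c *s y)"
    by (rule linearI) (auto simp: vec_eq_iff algebra_simps scaleR_conv_of_real)
  then show ?thesis using linear_conv_bounded_linear by blast
qed

lemma bounded_linear_vector_scalar_mult_left: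
  "bounded_linear (\<lambda>a. a *s w)" for w :: "complex^'n"
proof -
  have "linear (\<lambda>a::complex. a *s w)"
    by (rule linearI) (simp_all add: vec_eq_iff distrib_right mult_scaleR_left)
  then show ?thesis using linear_conv_bounded_linear by blast
qed

lemma continuous_on_vector_scalar_mult [continuous_intros]:
  fixes g :: "'a::topological_space \<Rightarrow> complex^'n"
  assumes "continuous_on S f" "continuous_on S g"
  shows "continuous_on S (\<lambda>x. f x *s g x)"
  unfolding vector_scalar_mult_def
  by (intro continuous_on_vec_lambda continuous_intros continuous_on_component assms)

lemma integral_vector_scalar_mult:
  fixes h :: "'a::euclidean_space \<Rightarrow> complex^'n"
  assumes "h integrable_on S"
  shows "integral S (\<lambda>t. c *s h t) = c *s integral S h"
  using integral_linear[OF assms bounded_linear_vector_scalar_mult_right[of c]] by (simp add: o_def)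

lemma has_field_derivative_vec_nth:
  fixes g :: "complex \<Rightarrow> complex^'n"
  assumes "(g has_derivative (\<lambda>a. a *s d)) (at z)"
  shows "((\<lambda>w. g w $ i) has_field_derivative d $ i) (at z)"
proof -
  have "((\<lambda>w. g w $ i) has_derivative (\<lambda>a. (a *s d) $ i)) (at z)"
    using bounded_linear.has_derivative[OF bounded_linear_vec_nth assms] .
  moreover have "(\<lambda>a. (a *s d) $ i) = (*) (d $ i)" by (auto simp: fun_eq_iff mult.commute)
  ultimately show ?thesis by (simp add: has_field_derivative_def)
qed

lemma holomorphic_on_vec_nth:
  fixes g :: "complex \<Rightarrow> complex^'n"
  assumes "\<And>z. z \<in> S \<Longrightarrow> (g has_derivative (\<lambda>a. a *s d z)) (at z)"
  shows "(\<lambda>z. g z $ i) holomorphic_on S"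
  unfolding holomorphic_on_def field_differentiable_def
  using has_field_derivative_vec_nth[OF assms] has_field_derivative_at_within by blast

lemma has_derivative_partials_complex_linear:
  fixes f :: "complex \<times> (complex^'n) \<Rightarrow> complex^'m"
  assumes f: "(f has_derivative L) (at (z, x))"
    and L: "\<And>c a v. L (c * a, c *s v) = c *s L (a, v)"
  shows "((\<lambda>y. f (z, y)) has_derivative (\<lambda>v. L (0, v))) (at x)"
    and "((\<lambda>w. f (w, x)) has_derivative (\<lambda>a. a *s L (1, 0))) (at z)"
    and "L (0, c *s v) = c *s L (0, v)"
proof -
  have "((\<lambda>y. (z, y)) has_derivative (\<lambda>v. (0, v))) (at x)"
    by (auto intro!: derivative_eq_intros)
  from has_derivative_compose[OF this f] show "((\<lambda>y. f (z, y)) has_derivative (\<lambda>v. L (0, v))) (at x)"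
    by simp
  have "((\<lambda>w. (w, x)) has_derivative (\<lambda>a. (a, 0))) (at z)"
    by (auto intro!: derivative_eq_intros)
  from has_derivative_compose[OF this f]
  have "((\<lambda>w. f (w, x)) has_derivative (\<lambda>a. L (a, 0))) (at z)" by simp
  moreover have "(\<lambda>a. L (a, 0)) = (\<lambda>a. a *s L (1, 0))"
  proof
    show "L (a, 0) = a *s L (1, 0)" for a using L[of a 1 0] by simp
  qed
  ultimately show "((\<lambda>w. f (w, x)) has_derivative (\<lambda>a. a *s L (1, 0))) (at z)" by simp
  show "L (0, c *s v) = c *s L (0, v)" using L[of c 0 v] by simp
qed

lemma has_derivative_integral_complex_param:
  fixes f d :: "complex \<Rightarrow> 'b::euclidean_space \<Rightarrow> complex^'n"
  assumes U: "open U" "convex U" "z0 \<in> U"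
    and f: "\<And>z t. z \<in> U \<Longrightarrow> t \<in> cbox a b \<Longrightarrow> ((\<lambda>z. f z t) has_derivative (\<lambda>c. c *s d z t)) (at z)"
    and int: "\<And>z. z \<in> U \<Longrightarrow> f z integrable_on cbox a b"
    and cont: "continuous_on (U \<times> cbox a b) (\<lambda>(z, t). d z t)"
  shows "((\<lambda>z. integral (cbox a b) (f z)) has_derivative (\<lambda>c. c *s integral (cbox a b) (d z0))) (at z0)"
proof -
  define D where "D z t = Blinfun (\<lambda>c. c *s d z t)" for z t
  have D_apply: "blinfun_apply (D z t) = (\<lambda>c. c *s d z t)" for z t
    unfolding D_def by (rule bounded_linear_Blinfun_apply[OF bounded_linear_vector_scalar_mult_left])
  have contD: "continuous_on (U \<times> cbox a b) (\<lambda>(z, t). D z t)"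
  proof (rule continuous_on_blinfun_componentwise)
    fix c :: complex
    have "continuous_on (U \<times> cbox a b) (\<lambda>q. c *s (\<lambda>(z, t). d z t) q)"
      by (rule bounded_linear.continuous_on[OF bounded_linear_vector_scalar_mult_right cont])
    then show "continuous_on (U \<times> cbox a b) (\<lambda>q. blinfun_apply (case q of (z, t) \<Rightarrow> D z t) c)"
      by (simp add: case_prod_beta D_apply)
  qed
  have "((\<lambda>z. f z t) has_derivative blinfun_apply (D z t)) (at z within U)"
    if "z \<in> U" "t \<in> cbox a b" for z t
    unfolding D_apply by (rule has_derivative_at_withinI[OF f[OF that]])
  from leibniz_rule[OF this int contD U(3,2)]
  have "((\<lambda>z. integral (cbox a b) (f z)) has_derivative integral (cbox a b) (D z0)) (at z0 within U)" .
  moreover have "blinfun_apply (integral (cbox a b) (D z0)) = (\<lambda>c. c *s integral (cbox a b) (d z0))"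
  proof
    fix c
    have "continuous_on (cbox a b) (\<lambda>t. (\<lambda>(z, t). D z t) (z0, t))"
      by (rule continuous_on_compose2[OF contD]) (auto intro!: continuous_intros simp: U)
    moreover have "continuous_on (cbox a b) (\<lambda>t. (\<lambda>(z, t). d z t) (z0, t))"
      by (rule continuous_on_compose2[OF cont]) (auto intro!: continuous_intros simp: U)
    ultimately have "D z0 integrable_on cbox a b" "d z0 integrable_on cbox a b"
      by (auto intro: integrable_continuous)
    then show "blinfun_apply (integral (cbox a b) (D z0)) c = c *s integral (cbox a b) (d z0)"
      by (simp add: blinfun_apply_integral D_apply integral_vector_scalar_mult)
  qed
  ultimately show ?thesis using at_within_open[OF U(3,1)] by simp
qed

lemma bij_inv_commute:
  assumes "bij f" and "\<And>x. f (h x) = h (f x)"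
  shows "inv f (h y) = h (inv f y)"
proof -
  have "inv f (h y) = inv f (h (f (inv f y)))" using assms(1) by (simp add: bij_is_surj surj_f_inv_f)
  also have "\<dots> = inv f (f (h (inv f y)))" by (simp only: assms(2))
  also have "\<dots> = h (inv f y)" using assms(1) by (simp add: bij_is_inj inv_f_f)
  finally show ?thesis .
qed

section \<open>Integrals over the unit circle\<close>

definition cis2pi :: "real \<Rightarrow> complex" where
  "cis2pi \<theta> = exp (2 * of_real pi * \<i> * of_real \<theta>)"

lemma cis2pi_nonzero [simp]: "cis2pi \<theta> \<noteq> 0"
  by (simp add: cis2pi_def)

lemma norm_cis2pi [simp]: "norm (cis2pi \<theta>) = 1"
  by (simp add: cis2pi_def norm_exp_eq_Re)

lemma cis2pi_add: "cis2pi (a + b) = cis2pi a * cis2pi b"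
  by (simp add: cis2pi_def distrib_left exp_add)

lemma cis2pi_minus: "cis2pi (- a) = inverse (cis2pi a)"
  by (simp add: cis2pi_def exp_minus)

lemma cis2pi_1 [simp]: "cis2pi 1 = 1"
  by (simp add: cis2pi_def)

lemma cis2pi_periodic: "cis2pi (\<theta> + 1) = cis2pi \<theta>"
  by (simp add: cis2pi_add)

lemma continuous_on_cis2pi [continuous_intros]:
  "continuous_on S f \<Longrightarrow> continuous_on S (\<lambda>x. cis2pi (f x))"
  unfolding cis2pi_def by (intro continuous_intros)

lemma sphere_cis2pi:
  assumes "norm w = 1"
  obtains \<theta> where "0 \<le> \<theta>" "\<theta> \<le> 1" "w = cis2pi \<theta>"
proof -
  define \<theta> where "\<theta> = Arg2pi w / (2 * pi)"
  have "0 \<le> Arg2pi w" "Arg2pi w < 2 * pi" "is_Arg w (Arg2pi w)" using Arg2pi[of w] by auto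
  then have "0 \<le> \<theta>" "\<theta> \<le> 1" by (auto simp: \<theta>_def field_simps)
  moreover have "w = exp (\<i> * of_real (Arg2pi w))"
    using \<open>is_Arg w (Arg2pi w)\<close> assms by (simp add: is_Arg_def)
  then have "w = cis2pi \<theta>" by (simp add: cis2pi_def \<theta>_def field_simps)
  ultimately show ?thesis using that by blast
qed

lemma Cauchy_deriv_integral_cis2pi:
  fixes f :: "complex \<Rightarrow> complex"
  assumes f: "f holomorphic_on S" and S: "open S" "cball c r \<subseteq> S" and r: "r > 0"
  shows "deriv f c = integral {0..1} (\<lambda>\<theta>. f (c + r * cis2pi \<theta>) / (r * cis2pi \<theta>))"
proof -
  have cont: "continuous_on (cball c r) f"
    using holomorphic_on_imp_continuous_on[OF f] continuous_on_subset S by blast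
  have hol: "f holomorphic_on ball c r"
    using S(2) ball_subset_cball by (blast intro: holomorphic_on_subset[OF f])
  have "c \<in> ball c r" using r by simp
  from Cauchy_derivative_integral_circlepath(2)[OF cont hol this]
  have "deriv f c = 1 / (2 * of_real pi * \<i>) * contour_integral (circlepath c r) (\<lambda>u. f u / (u - c)\<^sup>2)"
    by (rule DERIV_imp_deriv)
  also have "contour_integral (circlepath c r) (\<lambda>u. f u / (u - c)\<^sup>2) =
      integral {0..1} (\<lambda>\<theta>. (2 * of_real pi * \<i>) * (f (c + r * cis2pi \<theta>) / (r * cis2pi \<theta>)))"
    unfolding contour_integral_integral
  proof (rule integral_cong)
    fix \<theta> :: real
    have "f (circlepath c r \<theta>) / (circlepath c r \<theta> - c)\<^sup>2 * vector_derivative (circlepath c r) (at \<theta>)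
       = f (c + r * cis2pi \<theta>) / (r * cis2pi \<theta>)^2 * (2 * of_real pi * \<i> * r * cis2pi \<theta>)"
      by (simp only: vector_derivative_circlepath) (simp add: circlepath cis2pi_def)
    also have "\<dots> = (2 * of_real pi * \<i>) * (f (c + r * cis2pi \<theta>) / (r * cis2pi \<theta>))"
      using r by (simp add: power2_eq_square field_simps)
    finally show "f (circlepath c r \<theta>) / (circlepath c r \<theta> - c)\<^sup>2 * vector_derivative (circlepath c r) (at \<theta>)
       = (2 * of_real pi * \<i>) * (f (c + r * cis2pi \<theta>) / (r * cis2pi \<theta>))" .
  qed
  also have "\<dots> = (2 * of_real pi * \<i>) * integral {0..1} (\<lambda>\<theta>. f (c + r * cis2pi \<theta>) / (r * cis2pi \<theta>))"
    by (rule integral_mult_right)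
  finally show ?thesis by simp
qed

lemma Cauchy_deriv_integral_cis2pi_vec:
  fixes g :: "complex \<Rightarrow> complex^'n"
  assumes S: "open S" "cball c r \<subseteq> S" and r: "r > 0"
    and g: "\<And>t. t \<in> S \<Longrightarrow> (g has_derivative (\<lambda>a. a *s d t)) (at t)"
  shows "d c = integral {0..1} (\<lambda>\<theta>. (1 / (r * cis2pi \<theta>)) *s g (c + r * cis2pi \<theta>))"
proof -
  have c: "c \<in> S" using S r by (meson centre_in_cball less_imp_le subsetD)
  have circle: "c + r * cis2pi \<theta> \<in> S" for \<theta>
    using S r by (auto simp: dist_norm norm_mult)
  have "continuous_on S g"
    using g has_derivative_continuous continuous_at_imp_continuous_on by blast
  then have "continuous_on {0..1} (\<lambda>\<theta>. g (c + r * cis2pi \<theta>))"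
    by (rule continuous_on_compose2) (auto intro!: continuous_intros simp: circle)
  then have "continuous_on {0..1} (\<lambda>\<theta>. (1 / (r * cis2pi \<theta>)) *s g (c + r * cis2pi \<theta>))"
    using r by (intro continuous_intros) auto
  then have int: "(\<lambda>\<theta>. (1 / (r * cis2pi \<theta>)) *s g (c + r * cis2pi \<theta>)) integrable_on {0..1}"
    by (simp add: integrable_continuous_real)
  show ?thesis
  proof (rule vec_eq_iff[THEN iffD2], rule allI)
    fix i
    have "d c $ i = deriv (\<lambda>t. g t $ i) c"
      using has_field_derivative_vec_nth[OF g[OF c]] by (rule DERIV_imp_deriv[symmetric])
    also have "\<dots> = integral {0..1} (\<lambda>\<theta>. g (c + r * cis2pi \<theta>) $ i / (r * cis2pi \<theta>))"
      by (rule Cauchy_deriv_integral_cis2pi[OF holomorphic_on_vec_nth[OF g] S r])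
    also have "\<dots> = integral {0..1} (\<lambda>\<theta>. (1 / (r * cis2pi \<theta>)) *s g (c + r * cis2pi \<theta>)) $ i"
      using integral_linear[OF int bounded_linear_vec_nth[of i]] by (simp add: o_def field_simps)
    finally show "d c $ i = integral {0..1} (\<lambda>\<theta>. (1 / (r * cis2pi \<theta>)) *s g (c + r * cis2pi \<theta>)) $ i" .
  qed
qed

lemma integral_shift_periodic:
  fixes h :: "real \<Rightarrow> 'a::banach"
  assumes cont: "continuous_on UNIV h" and per: "\<And>t. h (t + 1) = h t" and a: "0 \<le> a" "a \<le> 1"
  shows "integral {0..1} (\<lambda>\<theta>. h (a + \<theta>)) = integral {0..1} h"
proof -
  have int: "h integrable_on {x..y}" for x y
    by (rule integrable_continuous_real, rule continuous_on_subset[OF cont]) auto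
  have "((h \<circ> (+) a) has_integral integral {a..1+a} h) {0..1}"
    using has_integral_shift_Icc_real integrable_integral[OF int[of a "1+a"]] by fastforce
  then have "integral {0..1} (\<lambda>\<theta>. h (a + \<theta>)) = integral {a..1+a} h"
    by (simp add: integral_unique o_def)
  also have "\<dots> = integral {a..1} h + integral {1..1+a} h"
    using Henstock_Kurzweil_Integration.integral_combine[where a=a and c=1 and b="1+a" and f=h] a int by simp
  also have "integral {1..1+a} h = integral {0..a} h"
  proof -
    have "((h \<circ> (+) (-1)) has_integral integral {0..a} h) {1..a+1}"
      using has_integral_shift_Icc_real[of h "-1" _ 1 "a+1"] integrable_integral[OF int[of 0 a]] by simp
    moreover have "h \<circ> (+) (-1) = h" using per[of "x - 1" for x] by (auto simp: fun_eq_iff o_def)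
    ultimately show ?thesis by (simp add: integral_unique add.commute)
  qed
  also have "integral {a..1} h + integral {0..a} h = integral {0..1} h"
    using Henstock_Kurzweil_Integration.integral_combine[where a=0 and c=a and b=1 and f=h] a int
    by (simp add: add.commute)
  finally show ?thesis .
qed

lemma islimpt_sphere_complex:
  assumes "0 < r" "z \<in> sphere (0::complex) r"
  shows "z islimpt sphere 0 r"
proof (rule connected_imp_perfect[OF _ assms(2)])
  show "connected (sphere (0::complex) r)" by (rule connected_sphere) simp
  fix x :: complex
  show "sphere 0 r \<noteq> {x}"
  proof
    assume "sphere 0 r = {x}"
    moreover have "of_real r \<in> sphere (0::complex) r" "- of_real r \<in> sphere (0::complex) r"
      using assms(1) by auto
    ultimately have "of_real r = (- of_real r :: complex)" by (metis singletonD)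
    then show False using assms(1) by simp
  qed
qed

section \<open>Polydiscs and the maximum modulus principle on annuli\<close>

lemma open_Collect_forall_compact_less:
  fixes f :: "'a::topological_space \<times> 'b::topological_space \<Rightarrow> real"
  assumes K: "compact K" and f: "continuous_on (UNIV \<times> K) f"
  shows "open {v. \<forall>z\<in>K. f (v, z) < r}"
proof (rule open_subopen[THEN iffD2], intro ballI)
  fix v0 assume v0: "v0 \<in> {v. \<forall>z\<in>K. f (v, z) < r}"
  obtain N where N: "open N" "N \<inter> (UNIV \<times> K) = f -` {..<r} \<inter> (UNIV \<times> K)"
    using f continuous_on_open_invariant[of "UNIV \<times> K" f] open_lessThan by metis
  have "{v0} \<times> K \<subseteq> N" using v0 N(2) by blast
  then obtain X where X: "v0 \<in> X" "open X" "X \<times> K \<subseteq> N"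
    using Elementary_Topology.tube_lemma[OF K N(1)] by blast
  then have "X \<subseteq> {v. \<forall>z\<in>K. f (v, z) < r}" using N(2) by blast
  then show "\<exists>T. open T \<and> v0 \<in> T \<and> T \<subseteq> {v. \<forall>z\<in>K. f (v, z) < r}" using X by blast
qed

lemma frontier_annulus_subset:
  fixes a b :: real
  shows "frontier (cball (0::complex) b - ball 0 a) \<subseteq> sphere 0 a \<union> sphere 0 b"
proof
  fix z assume z: "z \<in> frontier (cball (0::complex) b - ball 0 a)"
  let ?A = "cball (0::complex) b - ball 0 a"
  have "closed ?A" by (intro closed_Diff) auto
  then have "z \<in> ?A" using z frontier_subset_closed by blast
  moreover have "open {w::complex. a < norm w \<and> norm w < b}"
    by (simp add: Collect_conj_eq open_Int open_Collect_less continuous_intros)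
  then have "{w::complex. a < norm w \<and> norm w < b} \<subseteq> interior ?A"
    by (intro interior_maximal) auto
  moreover have "z \<notin> interior ?A" using z by (simp add: frontier_def)
  ultimately show "z \<in> sphere 0 a \<union> sphere 0 b" by force
qed

lemma is_interval_radii_circle_bound:
  assumes h: "h holomorphic_on - {0}"
  shows "is_interval {\<rho>. 0 < \<rho> \<and> (\<forall>w\<in>sphere 0 \<rho>. norm (h w) < r)}"
  unfolding is_interval_1
proof (intro ballI allI impI)
  fix \<rho>1 \<rho>2 \<rho>
  assume \<rho>1: "\<rho>1 \<in> {\<rho>. 0 < \<rho> \<and> (\<forall>w\<in>sphere 0 \<rho>. norm (h w) < r)}"
    and \<rho>2: "\<rho>2 \<in> {\<rho>. 0 < \<rho> \<and> (\<forall>w\<in>sphere 0 \<rho>. norm (h w) < r)}"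
    and \<rho>: "\<rho>1 \<le> \<rho> \<and> \<rho> \<le> \<rho>2"
  have pos: "0 < \<rho>1" "0 < \<rho>2" using \<rho>1 \<rho>2 by auto
  have bound: "\<forall>w\<in>sphere 0 \<rho>1 \<union> sphere 0 \<rho>2. norm (h w) < r"
    using \<rho>1 \<rho>2 by (simp add: ball_Un)
  let ?A = "cball (0::complex) \<rho>2 - ball 0 \<rho>1"
  let ?K = "sphere (0::complex) \<rho>1 \<union> sphere 0 \<rho>2"
  have "?A \<subseteq> - {0}" using pos by auto
  then have hA: "h holomorphic_on ?A" by (rule holomorphic_on_subset[OF h])
  have cont: "continuous_on ?K (\<lambda>w. norm (h w))"
    by (intro continuous_intros continuous_on_subset[OF holomorphic_on_imp_continuous_on[OF h]])
      (use pos in auto)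
  have "complex_of_real \<rho>1 \<in> ?K" using pos by simp
  then have "?K \<noteq> {}" by blast
  moreover have "compact ?K" by auto
  ultimately obtain w0 where w0: "w0 \<in> ?K" "\<And>w. w \<in> ?K \<Longrightarrow> norm (h w) \<le> norm (h w0)"
    using continuous_attains_sup[OF _ _ cont] by blast
  have "norm (h w0) < r" using bound w0(1) by (rule bspec)
  moreover have "norm (h w) \<le> norm (h w0)" if w: "w \<in> sphere 0 \<rho>" for w
  proof (rule maximum_modulus_frontier[where f=h and S="?A"])
    show "h holomorphic_on interior ?A" by (rule holomorphic_on_subset[OF hA interior_subset])
    have "closed ?A" by (intro closed_Diff) auto
    then show "continuous_on (closure ?A) h"
      using holomorphic_on_imp_continuous_on[OF hA] by simp
    show "bounded ?A" by (rule bounded_subset[of "cball 0 \<rho>2"]) auto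
    show "w \<in> ?A" using w \<rho> by simp
    show "norm (h z) \<le> norm (h w0)" if "z \<in> frontier ?A" for z
      using that frontier_annulus_subset[where a=\<rho>1 and b=\<rho>2] by (intro w0(2)) blast
  qed
  ultimately have "\<forall>w\<in>sphere 0 \<rho>. norm (h w) < r" by force
  then show "\<rho> \<in> {\<rho>. 0 < \<rho> \<and> (\<forall>w\<in>sphere 0 \<rho>. norm (h w) < r)}"
    using pos \<rho> by simp
qed

definition polydisc :: "real \<Rightarrow> (complex^'n) set" where
  "polydisc r = {v. \<forall>i. norm (v $ i) < r}"

lemma zero_in_polydisc: "0 < r \<Longrightarrow> 0 \<in> polydisc r"
  by (simp add: polydisc_def)

lemma polydisc_subset_ball: "polydisc r \<subseteq> ball (0::complex^'n) (of_nat CARD('n) * r)"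
proof
  fix v :: "complex^'n" assume "v \<in> polydisc r"
  have "norm v \<le> (\<Sum>i\<in>UNIV. norm (v $ i))"
    unfolding norm_vec_def by (rule L2_set_le_sum) simp
  also have "\<dots> < (\<Sum>i\<in>(UNIV::'n set). r)"
    using \<open>v \<in> polydisc r\<close> by (intro sum_strict_mono) (auto simp: polydisc_def)
  finally have "norm v < (\<Sum>i\<in>(UNIV::'n set). r)" .
  then show "v \<in> ball 0 (of_nat CARD('n) * r)" by simp
qed

lemma is_interval_radii_circle_polydisc:
  fixes H :: "complex \<Rightarrow> complex^'n"
  assumes "\<And>i. (\<lambda>w. H w $ i) holomorphic_on - {0}"
  shows "is_interval {\<rho>. 0 < \<rho> \<and> (\<forall>w\<in>sphere 0 \<rho>. H w \<in> polydisc r)}"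
  using is_interval_radii_circle_bound[OF assms]
  unfolding is_interval_1 polydisc_def by (simp add: Ball_def) blast

section \<open>Partial derivatives of a holomorphic C^*-action\<close>

locale holomorphic_Cstar_action =
  fixes \<phi> :: "complex \<Rightarrow> complex^'n \<Rightarrow> complex^'n"
  assumes action: "holo_Cstar_action \<phi>"
begin

lemma phi_one [simp]: "\<phi> 1 x = x"
  using action by (simp add: holo_Cstar_action_def)

lemma phi_mult: "z \<noteq> 0 \<Longrightarrow> w \<noteq> 0 \<Longrightarrow> \<phi> (z * w) x = \<phi> z (\<phi> w x)"
  using action by (simp add: holo_Cstar_action_def)

lemma phi_inverse_left: "z \<noteq> 0 \<Longrightarrow> \<phi> (inverse z) (\<phi> z x) = x"
  using phi_mult[of "inverse z" z x] by simp

lemma phi_inverse_right: "z \<noteq> 0 \<Longrightarrow> \<phi> z (\<phi> (inverse z) x) = x"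
  using phi_mult[of z "inverse z" x] by simp

lemma joint_derivative:
  assumes "z \<noteq> 0"
  obtains L where "((\<lambda>(z, x). \<phi> z x) has_derivative L) (at (z, x))"
    and "\<And>c a v. L (c * a, c *s v) = c *s L (a, v)"
proof -
  have "\<exists>L. ((\<lambda>(z, x). \<phi> z x) has_derivative L) (at (z, x)) \<and>
      (\<forall>c a v. L (c * a, c *s v) = c *s L (a, v))"
    using action assms unfolding holo_Cstar_action_def holo_prod_def by blast
  then show ?thesis using that by blast
qed

lemma continuous_on_phi: "continuous_on ((- {0}) \<times> UNIV) (\<lambda>(z, x). \<phi> z x)"
proof (rule continuous_at_imp_continuous_on, rule ballI)
  fix q :: "complex \<times> (complex^'n)" assume "q \<in> (- {0}) \<times> UNIV"
  then obtain z x where q: "q = (z, x)" "z \<noteq> 0" by auto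
  then obtain L where "((\<lambda>(z, x). \<phi> z x) has_derivative L) (at (z, x))"
    using joint_derivative by blast
  then show "isCont (\<lambda>(z, x). \<phi> z x) q" using q(1) by (blast intro: has_derivative_continuous)
qed

lemma continuous_on_phi_compose:
  assumes "continuous_on S f" "continuous_on S g" "\<And>s. s \<in> S \<Longrightarrow> f s \<noteq> 0"
  shows "continuous_on S (\<lambda>s. \<phi> (f s) (g s))"
proof -
  have "continuous_on S ((\<lambda>(z, x). \<phi> z x) \<circ> (\<lambda>s. (f s, g s)))"
    by (rule continuous_on_compose[OF continuous_on_Pair[OF assms(1,2)]],
        rule continuous_on_subset[OF continuous_on_phi]) (use assms(3) in auto)
  then show ?thesis by (simp add: o_def)
qed

definition Dx :: "complex \<Rightarrow> complex^'n \<Rightarrow> (complex^'n) \<Rightarrow>\<^sub>L (complex^'n)" where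
  "Dx z x = Blinfun (frechet_derivative (\<phi> z) (at x))"

definition Dz :: "complex \<Rightarrow> complex^'n \<Rightarrow> complex^'n" where
  "Dz z x = frechet_derivative (\<lambda>w. \<phi> w x) (at z) 1"

lemma
  assumes "z \<noteq> 0"
  shows has_derivative_Dx: "(\<phi> z has_derivative Dx z x) (at x)"
    and Dx_smult: "Dx z x (c *s v) = c *s Dx z x v"
proof -
  obtain L where L: "((\<lambda>(z, x). \<phi> z x) has_derivative L) (at (z, x))"
    and hom: "\<And>c a v. L (c * a, c *s v) = c *s L (a, v)"
    using joint_derivative[OF assms] by blast
  have der: "(\<phi> z has_derivative (\<lambda>v. L (0, v))) (at x)"
    using has_derivative_partials_complex_linear(1)[OF L hom] by simp
  then have "blinfun_apply (Dx z x) = (\<lambda>v. L (0, v))"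
    unfolding Dx_def using frechet_derivative_at[OF der]
    by (metis bounded_linear_Blinfun_apply has_derivative_bounded_linear)
  then show "(\<phi> z has_derivative Dx z x) (at x)" and "Dx z x (c *s v) = c *s Dx z x v"
    using der has_derivative_partials_complex_linear(3)[OF L hom] by simp_all
qed

lemma has_derivative_Dz:
  assumes "z \<noteq> 0"
  shows "((\<lambda>w. \<phi> w x) has_derivative (\<lambda>a. a *s Dz z x)) (at z)"
proof -
  obtain L where L: "((\<lambda>(z, x). \<phi> z x) has_derivative L) (at (z, x))"
    and hom: "\<And>c a v. L (c * a, c *s v) = c *s L (a, v)"
    using joint_derivative[OF assms] by blast
  have der: "((\<lambda>w. \<phi> w x) has_derivative (\<lambda>a. a *s L (1, 0))) (at z)"
    using has_derivative_partials_complex_linear(2)[OF L hom] by simp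
  have "Dz z x = L (1, 0)"
    unfolding Dz_def using frechet_derivative_at[OF der] by (metis vector_smult_lid)
  then show ?thesis using der by simp
qed

lemma continuous_on_phi_slice: "z \<noteq> 0 \<Longrightarrow> continuous_on UNIV (\<phi> z)"
  by (intro continuous_at_imp_continuous_on ballI has_derivative_continuous[OF has_derivative_Dx])

lemma Dx_mult:
  assumes "z \<noteq> 0" "w \<noteq> 0"
  shows "Dx (z * w) x = Dx z (\<phi> w x) o\<^sub>L Dx w x"
proof -
  have "(\<phi> z \<circ> \<phi> w has_derivative (Dx z (\<phi> w x) \<circ> Dx w x)) (at x)"
    using assms by (intro diff_chain_at has_derivative_Dx)
  moreover have "\<phi> z \<circ> \<phi> w = \<phi> (z * w)" using assms by (simp add: fun_eq_iff phi_mult)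
  ultimately have "(\<phi> (z * w) has_derivative (Dx z (\<phi> w x) \<circ> Dx w x)) (at x)" by simp
  moreover have "(\<phi> (z * w) has_derivative Dx (z * w) x) (at x)"
    using assms by (simp add: has_derivative_Dx)
  ultimately have "blinfun_apply (Dx (z * w) x) = Dx z (\<phi> w x) \<circ> Dx w x"
    by (rule has_derivative_unique[rotated])
  then show ?thesis by (intro blinfun_eqI) (simp add: fun_eq_iff)
qed

lemma Dx_one: "Dx 1 x = id_blinfun"
proof -
  have "\<phi> 1 = id" by (simp add: fun_eq_iff)
  then have "(\<phi> 1 has_derivative id) (at x)" by (simp add: has_derivative_id)
  then have "blinfun_apply (Dx 1 x) = id"
    using has_derivative_Dx[of 1 x] by (intro has_derivative_unique) simp_all
  then show ?thesis by (intro blinfun_eqI) simp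
qed

lemma Dx_eq_integral:
  assumes z: "z \<noteq> 0"
  shows "Dx z x v = integral {0..1} (\<lambda>\<theta>. (1 / cis2pi \<theta>) *s \<phi> z (x + cis2pi \<theta> *s v))"
proof -
  have line: "((\<lambda>t. x + t *s v) has_derivative (\<lambda>a. a *s v)) (at t)" for t
    using bounded_linear_imp_has_derivative[OF bounded_linear_vector_scalar_mult_left]
    by (auto intro!: derivative_eq_intros)
  have "((\<lambda>t. \<phi> z (x + t *s v)) has_derivative (\<lambda>a. a *s Dx z (x + t *s v) v)) (at t)" for t
    using diff_chain_at[OF line has_derivative_Dx[OF z]] by (simp add: o_def Dx_smult[OF z])
  from Cauchy_deriv_integral_cis2pi_vec[where c=0 and r=1, OF open_UNIV subset_UNIV zero_less_one this]
  show ?thesis by simp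
qed

lemma Dz_eq_integral:
  assumes z: "z \<noteq> 0" and r: "0 < r" "r < norm z"
  shows "Dz z x = integral {0..1} (\<lambda>\<theta>. (1 / (r * cis2pi \<theta>)) *s \<phi> (z + r * cis2pi \<theta>) x)"
proof -
  have "cball z r \<subseteq> - {0}" using r by (auto simp: dist_norm)
  from Cauchy_deriv_integral_cis2pi_vec[OF _ this r(1) has_derivative_Dz]
  show ?thesis by auto
qed

lemma continuous_on_Dx: "continuous_on ((- {0}) \<times> UNIV) (\<lambda>(z, x). Dx z x)"
proof (rule continuous_on_blinfun_componentwise)
  fix v
  have "continuous_on (((- {0}) \<times> UNIV) \<times> cbox 0 1)
      (\<lambda>((z, x), \<theta>). (1 / cis2pi \<theta>) *s \<phi> z (x + cis2pi \<theta> *s v))"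
    unfolding case_prod_beta by (intro continuous_intros continuous_on_phi_compose) auto
  from integral_continuous_on_param[OF this]
  show "continuous_on ((- {0}) \<times> UNIV) (\<lambda>q. blinfun_apply (case q of (z, x) \<Rightarrow> Dx z x) v)"
    by (rule continuous_on_eq) (simp add: case_prod_beta mem_Times_iff Dx_eq_integral)
qed

lemma continuous_on_Dx_compose:
  assumes "continuous_on S f" "continuous_on S g" "\<And>s. s \<in> S \<Longrightarrow> f s \<noteq> 0"
  shows "continuous_on S (\<lambda>s. Dx (f s) (g s))"
proof -
  have "continuous_on S ((\<lambda>(z, x). Dx z x) \<circ> (\<lambda>s. (f s, g s)))"
    by (rule continuous_on_compose[OF continuous_on_Pair[OF assms(1,2)]],
        rule continuous_on_subset[OF continuous_on_Dx]) (use assms(3) in auto)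
  then show ?thesis by (simp add: o_def)
qed

lemma continuous_on_Dz: "continuous_on ((- {0}) \<times> UNIV) (\<lambda>(z, x). Dz z x)"
proof (rule continuous_at_imp_continuous_on, rule ballI)
  fix q0 :: "complex \<times> (complex^'n)" assume "q0 \<in> (- {0}) \<times> UNIV"
  then obtain z0 x0 where q0: "q0 = (z0, x0)" "z0 \<noteq> 0" by auto
  define r where "r = norm z0 / 2" \<comment> \<open>one radius serves every z near z0\<close>
  define N where "N = ball z0 r \<times> (UNIV :: (complex^'n) set)"
  have r: "r > 0" using q0 by (simp add: r_def)
  have far: "r < norm z" if "z \<in> ball z0 r" for z
    using that norm_triangle_sub[of z0 z] by (simp add: r_def dist_norm)
  have "continuous_on (N \<times> cbox 0 1)
      (\<lambda>((z, x), \<theta>). (1 / (r * cis2pi \<theta>)) *s \<phi> (z + r * cis2pi \<theta>) x)"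
  proof -
    have "z + r * cis2pi \<theta> \<noteq> 0" if "z \<in> ball z0 r" for z \<theta>
    proof
      assume "z + r * cis2pi \<theta> = 0"
      then have "norm z = r" using r by (simp add: add_eq_0_iff2 norm_mult)
      then show False using far[OF that] by simp
    qed
    then show ?thesis unfolding case_prod_beta N_def using r
      by (intro continuous_intros continuous_on_phi_compose) auto
  qed
  from integral_continuous_on_param[OF this]
  have "continuous_on N (\<lambda>(z, x). Dz z x)"
  proof (rule continuous_on_eq, clarify)
    fix z x assume "(z, x) \<in> N"
    then have "z \<in> ball z0 r" by (simp add: N_def)
    then have "r < norm z" by (rule far)
    moreover from this have "z \<noteq> 0" using r by auto
    ultimately show "integral (cbox 0 1)
        (\<lambda>\<theta>. (1 / (r * cis2pi \<theta>)) *s \<phi> (z + r * cis2pi \<theta>) x) = Dz z x"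
      using r by (simp add: Dz_eq_integral)
  qed
  moreover have "open N" "q0 \<in> N" using r by (auto simp: N_def q0 open_Times)
  ultimately show "isCont (\<lambda>(z, x). Dz z x) q0"
    using continuous_on_eq_continuous_at by blast
qed

end

section \<open>The averaged linearizing map\<close>

locale Cstar_action_fixed_point = holomorphic_Cstar_action \<phi>
  for \<phi> :: "complex \<Rightarrow> complex^'n \<Rightarrow> complex^'n" +
  fixes p :: "complex^'n"
  assumes fixed_point: "z \<noteq> 0 \<Longrightarrow> \<phi> z p = p"
begin

definition lin :: "complex \<Rightarrow> (complex^'n) \<Rightarrow>\<^sub>L (complex^'n)" where
  "lin z = Dx z p"

lemma has_derivative_lin: "z \<noteq> 0 \<Longrightarrow> (\<phi> z has_derivative lin z) (at p)"
  unfolding lin_def by (rule has_derivative_Dx)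

lemma lin_mult: "z \<noteq> 0 \<Longrightarrow> w \<noteq> 0 \<Longrightarrow> lin (z * w) = lin z o\<^sub>L lin w"
  unfolding lin_def by (simp add: Dx_mult fixed_point)

lemma lin_mult_apply: "z \<noteq> 0 \<Longrightarrow> w \<noteq> 0 \<Longrightarrow> lin (z * w) v = lin z (lin w v)"
  by (simp add: lin_mult)

lemma lin_one: "lin 1 = id_blinfun"
  unfolding lin_def by (rule Dx_one)

lemma lin_inverse_left: "z \<noteq> 0 \<Longrightarrow> lin (inverse z) (lin z v) = v"
  using lin_mult_apply[of "inverse z" z v] by (simp add: lin_one)

lemma lin_inverse_right: "z \<noteq> 0 \<Longrightarrow> lin z (lin (inverse z) v) = v"
  using lin_inverse_left[of "inverse z" v] by simp

lemma lin_smult: "z \<noteq> 0 \<Longrightarrow> lin z (c *s v) = c *s lin z v"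
  unfolding lin_def by (rule Dx_smult)

lemma continuous_on_lin: "continuous_on (- {0}) lin"
  unfolding lin_def by (intro continuous_on_Dx_compose continuous_intros) auto

lemma continuous_on_lin_apply: "S \<subseteq> - {0} \<Longrightarrow> continuous_on S (\<lambda>z. lin z v)"
  by (intro continuous_intros continuous_on_subset[OF continuous_on_lin])

lemma has_derivative_lin_apply:
  assumes z0: "z0 \<noteq> 0"
  shows "((\<lambda>z. lin z v) has_derivative
    (\<lambda>a. a *s integral {0..1} (\<lambda>\<theta>. (1 / cis2pi \<theta>) *s Dz z0 (p + cis2pi \<theta> *s v)))) (at z0)"
proof -
  define U where "U = ball z0 (norm z0 / 2)"
  have U: "open U" "convex U" "z0 \<in> U" using z0 by (auto simp: U_def)
  have U0: "z \<noteq> 0" if "z \<in> U" for z using that by (auto simp: U_def)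
  have "((\<lambda>z. integral (cbox 0 1) (\<lambda>\<theta>. (1 / cis2pi \<theta>) *s \<phi> z (p + cis2pi \<theta> *s v))) has_derivative
      (\<lambda>a. a *s integral (cbox 0 1) (\<lambda>\<theta>. (1 / cis2pi \<theta>) *s Dz z0 (p + cis2pi \<theta> *s v)))) (at z0)"
  proof (rule has_derivative_integral_complex_param[OF U])
    show "((\<lambda>z. (1 / cis2pi \<theta>) *s \<phi> z (p + cis2pi \<theta> *s v)) has_derivative
        (\<lambda>a. a *s ((1 / cis2pi \<theta>) *s Dz z (p + cis2pi \<theta> *s v)))) (at z)" if "z \<in> U" for z \<theta>
    proof -
      have "(\<lambda>a. (1 / cis2pi \<theta>) *s (a *s Dz z (p + cis2pi \<theta> *s v))) =
          (\<lambda>a. a *s ((1 / cis2pi \<theta>) *s Dz z (p + cis2pi \<theta> *s v)))"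
        by (simp add: fun_eq_iff vec_eq_iff mult.commute)
      then show ?thesis
        using bounded_linear.has_derivative[OF bounded_linear_vector_scalar_mult_right
            has_derivative_Dz[OF U0[OF that]]] by metis
    qed
    show "(\<lambda>\<theta>. (1 / cis2pi \<theta>) *s \<phi> z (p + cis2pi \<theta> *s v)) integrable_on cbox 0 1" if "z \<in> U" for z
      using U0[OF that]
      by (intro integrable_continuous continuous_intros continuous_on_phi_compose) auto
    have "continuous_on (U \<times> cbox 0 1) (\<lambda>q. Dz (fst q) (p + cis2pi (snd q) *s v))"
      by (rule continuous_on_compose2[OF continuous_on_Dz, where f="\<lambda>q. (fst q, p + cis2pi (snd q) *s v)", simplified])
        (auto simp: U0 intro!: continuous_intros)
    then show "continuous_on (U \<times> cbox 0 1) (\<lambda>(z, \<theta>). (1 / cis2pi \<theta>) *s Dz z (p + cis2pi \<theta> *s v))"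
      unfolding case_prod_beta by (intro continuous_intros) auto
  qed
  then show ?thesis unfolding box_real(2)
    by (rule has_derivative_transform_within_open[OF _ U(1,3)]) (simp add: U0 lin_def Dx_eq_integral)
qed

lemma holomorphic_lin_apply_nth: "(\<lambda>z. lin z v $ i) holomorphic_on - {0}"
  by (rule holomorphic_on_vec_nth) (auto intro: has_derivative_lin_apply)

definition linearizer :: "complex^'n \<Rightarrow> complex^'n" where
  "linearizer x = integral {0..1} (\<lambda>\<theta>. lin (cis2pi (- \<theta>)) (\<phi> (cis2pi \<theta>) x - p))"

definition linearizer_deriv :: "complex^'n \<Rightarrow> (complex^'n) \<Rightarrow>\<^sub>L (complex^'n)" where
  "linearizer_deriv x = integral {0..1} (\<lambda>\<theta>. lin (cis2pi (- \<theta>)) o\<^sub>L Dx (cis2pi \<theta>) x)"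

lemma continuous_on_lin_cis2pi: "continuous_on S f \<Longrightarrow> continuous_on S (\<lambda>q. lin (cis2pi (f q)))"
  by (rule continuous_on_compose2[OF continuous_on_lin]) (auto intro!: continuous_intros)

lemma continuous_on_linearizer_integrand:
  assumes "continuous_on S f" "continuous_on S g"
  shows "continuous_on S (\<lambda>q. lin (cis2pi (- g q)) (\<phi> (cis2pi (g q)) (f q) - p))"
proof (rule bounded_bilinear.continuous_on[OF bounded_bilinear_blinfun_apply])
  show "continuous_on S (\<lambda>q. lin (cis2pi (- g q)))"
    using assms by (intro continuous_on_lin_cis2pi continuous_intros)
  show "continuous_on S (\<lambda>q. \<phi> (cis2pi (g q)) (f q) - p)"
    using assms by (intro continuous_intros continuous_on_phi_compose) auto
qed

lemma continuous_on_linearizer_deriv_integrand: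
  "continuous_on (UNIV \<times> cbox 0 1) (\<lambda>(x, \<theta>). lin (cis2pi (- \<theta>)) o\<^sub>L Dx (cis2pi \<theta>) x)"
  unfolding case_prod_beta
  by (intro bounded_bilinear.continuous_on[OF bounded_bilinear_blinfun_compose]
      continuous_on_lin_cis2pi continuous_on_Dx_compose continuous_intros) auto

lemma has_derivative_linearizer: "(linearizer has_derivative linearizer_deriv x) (at x)"
proof -
  have "((\<lambda>x. lin (cis2pi (- \<theta>)) (\<phi> (cis2pi \<theta>) x - p)) has_derivative
      lin (cis2pi (- \<theta>)) o\<^sub>L Dx (cis2pi \<theta>) x) (at x within UNIV)" for x \<theta>
    by (auto intro!: derivative_eq_intros has_derivative_Dx
        bounded_linear.has_derivative[OF blinfun.bounded_linear_right])
  moreover have "(\<lambda>\<theta>. lin (cis2pi (- \<theta>)) (\<phi> (cis2pi \<theta>) x - p)) integrable_on cbox 0 1" for x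
    by (intro integrable_continuous continuous_on_linearizer_integrand continuous_intros)
  ultimately show ?thesis
    using leibniz_rule[OF _ _ continuous_on_linearizer_deriv_integrand, of _ x]
    by (simp add: linearizer_def[abs_def] linearizer_deriv_def)
qed

lemma continuous_on_linearizer: "continuous_on UNIV linearizer"
  by (intro continuous_at_imp_continuous_on ballI has_derivative_continuous[OF has_derivative_linearizer])

lemma continuous_on_linearizer_deriv: "continuous_on UNIV linearizer_deriv"
  using integral_continuous_on_param[OF continuous_on_linearizer_deriv_integrand]
  by (simp add: linearizer_deriv_def[abs_def])

lemma linearizer_deriv_apply:
  "linearizer_deriv x v = integral {0..1} (\<lambda>\<theta>. lin (cis2pi (- \<theta>)) (Dx (cis2pi \<theta>) x v))"
proof -
  have "continuous_on {0..1}
      (\<lambda>\<theta>. (\<lambda>(x, \<theta>). lin (cis2pi (- \<theta>)) o\<^sub>L Dx (cis2pi \<theta>) x) (x, \<theta>))"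
    by (rule continuous_on_compose2[OF continuous_on_linearizer_deriv_integrand])
      (auto intro!: continuous_intros)
  then show ?thesis
    unfolding linearizer_deriv_def
    by (subst blinfun_apply_integral) (simp_all add: integrable_continuous_real)
qed

lemma linearizer_deriv_smult: "linearizer_deriv x (c *s v) = c *s linearizer_deriv x v"
proof -
  have "continuous_on {0..1} (\<lambda>\<theta>. lin (cis2pi (- \<theta>)) (Dx (cis2pi \<theta>) x v))"
    by (intro continuous_intros bounded_bilinear.continuous_on[OF bounded_bilinear_blinfun_apply]
        continuous_on_lin_cis2pi continuous_on_Dx_compose) auto
  then show ?thesis
    by (simp add: linearizer_deriv_apply Dx_smult lin_smult integral_vector_scalar_mult
        integrable_continuous_real)
qed

lemma holo_vec_linearizer: "holo_vec UNIV linearizer"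
  unfolding holo_vec_def using has_derivative_linearizer linearizer_deriv_smult by blast

lemma linearizer_fixed_point: "linearizer p = 0"
  by (simp add: linearizer_def fixed_point)

lemma linearizer_deriv_fixed_point: "linearizer_deriv p = id_blinfun"
proof -
  have "lin (cis2pi (- \<theta>)) o\<^sub>L Dx (cis2pi \<theta>) p = id_blinfun" for \<theta>
    using lin_mult[of "cis2pi (- \<theta>)" "cis2pi \<theta>"] by (simp add: lin_def cis2pi_minus Dx_one)
  then show ?thesis by (simp add: linearizer_deriv_def)
qed

lemma linearizer_equivariant_circle:
  assumes a: "0 \<le> a" "a \<le> 1"
  shows "linearizer (\<phi> (cis2pi a) x) = lin (cis2pi a) (linearizer x)"
proof -
  define h where "h \<theta> = lin (cis2pi (- \<theta>)) (\<phi> (cis2pi \<theta>) x - p)" for \<theta>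
  have cont: "continuous_on UNIV h"
    unfolding h_def by (intro continuous_on_linearizer_integrand continuous_intros)
  have "h (\<theta> + 1) = h \<theta>" for \<theta>
    using cis2pi_periodic[of "- \<theta> - 1"] by (simp add: h_def cis2pi_periodic)
  then have shift: "integral {0..1} (\<lambda>\<theta>. h (a + \<theta>)) = linearizer x"
    using integral_shift_periodic[OF cont _ a] by (simp add: h_def[abs_def] linearizer_def)
  have "lin (cis2pi (- \<theta>)) (\<phi> (cis2pi \<theta>) (\<phi> (cis2pi a) x) - p) = lin (cis2pi a) (h (a + \<theta>))" for \<theta>
  proof -
    have "\<phi> (cis2pi \<theta>) (\<phi> (cis2pi a) x) = \<phi> (cis2pi (a + \<theta>)) x"
      by (simp add: phi_mult[symmetric] cis2pi_add mult.commute)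
    moreover have "cis2pi (- \<theta>) = cis2pi a * cis2pi (- (a + \<theta>))"
      by (simp add: cis2pi_add[symmetric])
    ultimately show ?thesis by (simp add: h_def lin_mult)
  qed
  then have "linearizer (\<phi> (cis2pi a) x) = integral {0..1} (\<lambda>\<theta>. lin (cis2pi a) (h (a + \<theta>)))"
    by (simp add: linearizer_def)
  also have "\<dots> = lin (cis2pi a) (integral {0..1} (\<lambda>\<theta>. h (a + \<theta>)))"
  proof -
    have "continuous_on {0..1} (\<lambda>\<theta>. h (a + \<theta>))"
      by (rule continuous_on_compose2[OF cont]) (auto intro!: continuous_intros)
    then have "(\<lambda>\<theta>. h (a + \<theta>)) integrable_on {0..1}" by (rule integrable_continuous_real)
    from integral_linear[OF this blinfun.bounded_linear_right] show ?thesis by (simp add: o_def)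
  qed
  finally show ?thesis by (simp add: shift)
qed

lemma linearizer_equivariant:
  assumes z: "z \<noteq> 0"
  shows "linearizer (\<phi> z x) = lin z (linearizer x)"
proof (rule vec_eq_iff[THEN iffD2], rule allI)
  fix i
  define k where "k w = linearizer (\<phi> w x) $ i - lin w (linearizer x) $ i" for w
  have "((\<lambda>w. linearizer (\<phi> w x)) has_derivative
      (\<lambda>a. a *s linearizer_deriv (\<phi> w x) (Dz w x))) (at w)"
    if "w \<noteq> 0" for w
    using diff_chain_at[OF has_derivative_Dz[OF that] has_derivative_linearizer]
    by (simp add: o_def linearizer_deriv_smult)
  then have hol: "k holomorphic_on - {0}"
    unfolding k_def by (intro holomorphic_on_diff holomorphic_on_vec_nth holomorphic_lin_apply_nth) auto
  have "k z = 0"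
  proof (rule analytic_continuation[OF hol])
    show "open (- {0::complex})" "(1::complex) \<in> - {0}" "sphere 0 1 \<subseteq> - {0::complex}" "z \<in> - {0}"
      using z by auto
    show "connected (- {0::complex})" by (rule connected_punctured_universe) simp
    show "1 islimpt sphere (0::complex) 1" by (rule islimpt_sphere_complex) simp_all
    show "k w = 0" if "w \<in> sphere 0 1" for w
    proof -
      have "norm w = 1" using that by simp
      then obtain a where "0 \<le> a" "a \<le> 1" "w = cis2pi a" by (rule sphere_cis2pi)
      then show ?thesis by (simp add: k_def linearizer_equivariant_circle)
    qed
  qed
  then show "linearizer (\<phi> z x) $ i = lin z (linearizer x) $ i" by (simp add: k_def)
qed

end

section \<open>An invariant domain of injectivity\<close>

locale linearizer_local_inverse = Cstar_action_fixed_point \<phi> p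
  for \<phi> :: "complex \<Rightarrow> complex^'n \<Rightarrow> complex^'n" and p +
  fixes U0 V0 :: "(complex^'n) set" and g :: "complex^'n \<Rightarrow> complex^'n"
    and g' :: "complex^'n \<Rightarrow> complex^'n \<Rightarrow> complex^'n" and r :: real
  assumes open_U0: "open U0" and p_in_U0: "p \<in> U0"
    and homeo: "homeomorphism U0 V0 linearizer g"
    and has_derivative_g: "\<And>y. y \<in> V0 \<Longrightarrow> (g has_derivative g' y) (at y)"
    and g'_eq: "\<And>y. y \<in> V0 \<Longrightarrow> g' y = inv (linearizer_deriv (g y))"
    and bij_linearizer_deriv: "\<And>y. y \<in> V0 \<Longrightarrow> bij (linearizer_deriv (g y))"
    and r_pos: "0 < r" and polydisc_subset_V0: "polydisc r \<subseteq> V0"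
begin

lemma g_linearizer: "x \<in> U0 \<Longrightarrow> g (linearizer x) = x"
  and linearizer_g: "y \<in> V0 \<Longrightarrow> linearizer (g y) = y"
  and g_in_U0: "y \<in> V0 \<Longrightarrow> g y \<in> U0"
  and continuous_on_g: "continuous_on V0 g"
  using homeo unfolding homeomorphism_def by auto

lemma g'_smult:
  assumes "y \<in> V0"
  shows "g' y (c *s v) = c *s g' y v"
proof -
  have "inv (linearizer_deriv (g y)) (c *s v) = c *s inv (linearizer_deriv (g y)) v"
    by (rule bij_inv_commute[where h="\<lambda>v. c *s v", OF bij_linearizer_deriv[OF assms]])
      (rule linearizer_deriv_smult)
  then show ?thesis using assms by (simp add: g'_eq)
qed

text \<open>Polydiscs rather than balls: the maximum modulus principle applies coordinatewise,
  which makes the set of admissible scalings of a vector connected.\<close>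

definition circ_polydisc :: "(complex^'n) set" where
  "circ_polydisc = {v. \<forall>z\<in>sphere 0 1. lin z v \<in> polydisc r}"

definition base_nbhd :: "(complex^'n) set" where
  "base_nbhd = U0 \<inter> linearizer -` circ_polydisc"

definition orbit_nbhd :: "(complex^'n) set" where
  "orbit_nbhd = {x. \<exists>c u. c \<noteq> 0 \<and> u \<in> base_nbhd \<and> x = \<phi> c u}"

lemma open_circ_polydisc: "open circ_polydisc"
proof -
  have "continuous_on (UNIV \<times> sphere 0 1) (\<lambda>q. lin (snd q))"
    by (rule continuous_on_compose2[OF continuous_on_lin]) (auto intro!: continuous_intros)
  then have cont: "continuous_on (UNIV \<times> sphere 0 1) (\<lambda>q. norm (lin (snd q) (fst q) $ i))" for i
    by (auto intro!: continuous_intros)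
  have "open {v. \<forall>z\<in>sphere 0 1. norm (lin z v $ i) < r}" for i
    using open_Collect_forall_compact_less[OF compact_sphere cont[of i]] by simp
  then have "open (\<Inter>i. {v. \<forall>z\<in>sphere 0 1. norm (lin z v $ i) < r})"
    by (intro open_INT) auto
  moreover have "circ_polydisc = (\<Inter>i. {v. \<forall>z\<in>sphere 0 1. norm (lin z v $ i) < r})"
    by (auto simp: circ_polydisc_def polydisc_def)
  ultimately show ?thesis by simp
qed

lemma zero_in_circ_polydisc: "0 \<in> circ_polydisc"
  using r_pos by (simp add: circ_polydisc_def zero_in_polydisc)

lemma circ_polydisc_subset_V0: "circ_polydisc \<subseteq> V0"
proof
  fix v assume "v \<in> circ_polydisc"
  then have "lin 1 v \<in> polydisc r" unfolding circ_polydisc_def by simp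
  then show "v \<in> V0" using polydisc_subset_V0 by (auto simp: lin_one)
qed

lemma lin_in_circ_polydisc_iff:
  assumes c: "c \<noteq> 0"
  shows "lin c v \<in> circ_polydisc \<longleftrightarrow> (\<forall>w\<in>sphere 0 (norm c). lin w v \<in> polydisc r)"
proof
  assume H: "lin c v \<in> circ_polydisc"
  show "\<forall>w\<in>sphere 0 (norm c). lin w v \<in> polydisc r"
  proof
    fix w :: complex assume w: "w \<in> sphere 0 (norm c)"
    then have "w / c \<in> sphere 0 1" "w / c \<noteq> 0" using c by (auto simp: norm_divide)
    moreover have "lin w v = lin (w / c) (lin c v)" using c calculation(2) by (simp add: lin_mult_apply[symmetric])
    ultimately show "lin w v \<in> polydisc r" using H by (simp add: circ_polydisc_def)
  qed
next
  assume H: "\<forall>w\<in>sphere 0 (norm c). lin w v \<in> polydisc r"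
  show "lin c v \<in> circ_polydisc" unfolding circ_polydisc_def
  proof (intro CollectI ballI)
    fix z :: complex assume z: "z \<in> sphere 0 1"
    then have "z \<noteq> 0" by auto
    then have "lin z (lin c v) = lin (z * c) v" using c by (simp add: lin_mult_apply)
    moreover have "z * c \<in> sphere 0 (norm c)" using z by (simp add: norm_mult)
    ultimately show "lin z (lin c v) \<in> polydisc r" using H by simp
  qed
qed

lemma connected_circ_polydisc_scalings: "connected {c. c \<noteq> 0 \<and> lin c v \<in> circ_polydisc}"
proof -
  define R where "R = {\<rho>. 0 < \<rho> \<and> (\<forall>w\<in>sphere 0 \<rho>. lin w v \<in> polydisc r)}"
  have "is_interval R"
    unfolding R_def by (rule is_interval_radii_circle_polydisc) (rule holomorphic_lin_apply_nth)
  then have "connected ((\<lambda>(\<rho>, \<theta>). complex_of_real \<rho> * cis2pi \<theta>) ` (R \<times> UNIV))"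
    by (intro connected_continuous_image connected_Times is_interval_connected connected_UNIV)
      (auto simp: case_prod_beta intro!: continuous_intros)
  moreover have "(\<lambda>(\<rho>, \<theta>). complex_of_real \<rho> * cis2pi \<theta>) ` (R \<times> UNIV) =
      {c. c \<noteq> 0 \<and> lin c v \<in> circ_polydisc}"
  proof (intro set_eqI iffI)
    fix c assume "c \<in> {c. c \<noteq> 0 \<and> lin c v \<in> circ_polydisc}"
    then have c: "c \<noteq> 0" "lin c v \<in> circ_polydisc" by auto
    have "norm (c / norm c) = 1" using c by (simp add: norm_divide)
    then obtain \<theta> where "c / norm c = cis2pi \<theta>" using sphere_cis2pi by metis
    then have "c = complex_of_real (norm c) * cis2pi \<theta>" using c by (simp add: field_simps)
    moreover have "norm c \<in> R" using c lin_in_circ_polydisc_iff[OF c(1)] by (simp add: R_def)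
    ultimately show "c \<in> (\<lambda>(\<rho>, \<theta>). complex_of_real \<rho> * cis2pi \<theta>) ` (R \<times> UNIV)"
      by (intro image_eqI[of _ _ "(norm c, \<theta>)"]) auto
  next
    fix c assume "c \<in> (\<lambda>(\<rho>, \<theta>). complex_of_real \<rho> * cis2pi \<theta>) ` (R \<times> UNIV)"
    then obtain \<rho> \<theta> where c: "c = complex_of_real \<rho> * cis2pi \<theta>" "\<rho> \<in> R" by auto
    then have "0 < \<rho>" "norm c = \<rho>" by (auto simp: R_def norm_mult)
    then show "c \<in> {c. c \<noteq> 0 \<and> lin c v \<in> circ_polydisc}"
      using c lin_in_circ_polydisc_iff[of c] by (auto simp: R_def)
  qed
  ultimately show ?thesis by simp
qed

lemma open_base_nbhd: "open base_nbhd"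
  unfolding base_nbhd_def
  by (intro open_Int open_U0 open_vimage open_circ_polydisc continuous_on_linearizer)

lemma p_in_base_nbhd: "p \<in> base_nbhd"
  using p_in_U0 zero_in_circ_polydisc by (simp add: base_nbhd_def linearizer_fixed_point)

lemma g_in_base_nbhd: "v \<in> circ_polydisc \<Longrightarrow> g v \<in> base_nbhd"
  and linearizer_g_circ: "v \<in> circ_polydisc \<Longrightarrow> linearizer (g v) = v"
  using circ_polydisc_subset_V0 by (auto simp: base_nbhd_def g_in_U0 linearizer_g)

text \<open>A clopen argument on the connected set of admissible scalings, starting from c = 1.\<close>

lemma phi_eq_g_lin:
  assumes y: "y \<in> base_nbhd" and c: "c \<noteq> 0" "lin c (linearizer y) \<in> circ_polydisc"
  shows "\<phi> c y = g (lin c (linearizer y))"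
proof -
  define v where "v = linearizer y"
  define T where "T = {c. c \<noteq> 0 \<and> lin c v \<in> circ_polydisc}"
  define S where "S = {c \<in> T. \<phi> c y - g (lin c v) = 0}"
  have T0: "T \<subseteq> - {0}" by (auto simp: T_def)
  have "continuous_on T (\<lambda>c. \<phi> c y)"
    using T0 by (intro continuous_on_phi_compose continuous_intros) auto
  moreover have "continuous_on T (\<lambda>c. g (lin c v))"
    by (rule continuous_on_compose2[OF continuous_on_g continuous_on_lin_apply[OF T0]])
      (use circ_polydisc_subset_V0 in \<open>auto simp: T_def\<close>)
  ultimately have "closedin (top_of_set T) S"
    unfolding S_def by (intro continuous_closedin_preimage_constant continuous_intros)
  moreover have "S = T \<inter> ((- {0}) \<inter> (\<lambda>c. \<phi> c y) -` U0)"
  proof (intro set_eqI iffI)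
    fix c assume "c \<in> S"
    then have "c \<in> T" "\<phi> c y = g (lin c v)" by (auto simp: S_def)
    then show "c \<in> T \<inter> ((- {0}) \<inter> (\<lambda>c. \<phi> c y) -` U0)"
      using circ_polydisc_subset_V0 by (auto simp: T_def g_in_U0)
  next
    fix c assume c: "c \<in> T \<inter> ((- {0}) \<inter> (\<lambda>c. \<phi> c y) -` U0)"
    then have "g (lin c v) = \<phi> c y"
      using g_linearizer[of "\<phi> c y"] by (simp add: v_def linearizer_equivariant)
    then show "c \<in> S" using c by (simp add: S_def)
  qed
  moreover have "open ((- {0}) \<inter> (\<lambda>c. \<phi> c y) -` U0)"
    by (intro continuous_open_preimage open_U0 continuous_on_phi_compose continuous_intros) auto
  ultimately have "openin (top_of_set T) S" "closedin (top_of_set T) S"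
    by (auto intro: openin_open_Int)
  moreover have "1 \<in> S"
    using y g_linearizer[of y] by (simp add: S_def T_def v_def lin_one base_nbhd_def)
  ultimately have "S = T"
    using connected_circ_polydisc_scalings[of v] unfolding connected_clopen T_def by blast
  moreover have "c \<in> T" using c by (simp add: T_def v_def)
  ultimately show ?thesis by (auto simp: S_def v_def)
qed

lemma orbit_injective:
  assumes "y \<in> base_nbhd" "u \<in> base_nbhd" "c \<noteq> 0" and eq: "linearizer u = lin c (linearizer y)"
  shows "u = \<phi> c y"
proof -
  have "linearizer u \<in> circ_polydisc" using assms(2) by (simp add: base_nbhd_def)
  then have "\<phi> c y = g (linearizer u)" using assms by (simp add: phi_eq_g_lin)
  also have "\<dots> = u" using assms(2) by (simp add: base_nbhd_def g_linearizer)
  finally show ?thesis by simp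
qed

lemma mem_orbit_nbhd_iff: "x \<in> orbit_nbhd \<longleftrightarrow> (\<exists>c. c \<noteq> 0 \<and> \<phi> (inverse c) x \<in> base_nbhd)"
proof
  assume "x \<in> orbit_nbhd"
  then obtain c u where "c \<noteq> 0" "u \<in> base_nbhd" "x = \<phi> c u" by (auto simp: orbit_nbhd_def)
  then show "\<exists>c. c \<noteq> 0 \<and> \<phi> (inverse c) x \<in> base_nbhd"
    by (intro exI[of _ c]) (simp add: phi_inverse_left)
next
  assume "\<exists>c. c \<noteq> 0 \<and> \<phi> (inverse c) x \<in> base_nbhd"
  then obtain c where "c \<noteq> 0" "\<phi> (inverse c) x \<in> base_nbhd" by blast
  then show "x \<in> orbit_nbhd"
    unfolding orbit_nbhd_def
    by (intro CollectI exI[of _ c] exI[of _ "\<phi> (inverse c) x"]) (simp add: phi_inverse_right)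
qed

lemma mem_linearizer_orbit_nbhd_iff:
  "y \<in> linearizer ` orbit_nbhd \<longleftrightarrow> (\<exists>c. c \<noteq> 0 \<and> lin (inverse c) y \<in> circ_polydisc)"
proof
  assume "y \<in> linearizer ` orbit_nbhd"
  then obtain c u where c: "c \<noteq> 0" and u: "u \<in> base_nbhd" and y: "y = linearizer (\<phi> c u)"
    by (auto simp: orbit_nbhd_def)
  have "lin (inverse c) y = linearizer u" using c by (simp add: y linearizer_equivariant lin_inverse_left)
  then show "\<exists>c. c \<noteq> 0 \<and> lin (inverse c) y \<in> circ_polydisc"
    using c u by (intro exI[of _ c]) (simp add: base_nbhd_def)
next
  assume "\<exists>c. c \<noteq> 0 \<and> lin (inverse c) y \<in> circ_polydisc"
  then obtain c where c: "c \<noteq> 0" "lin (inverse c) y \<in> circ_polydisc" by blast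
  define x where "x = \<phi> c (g (lin (inverse c) y))"
  have "x \<in> orbit_nbhd"
    unfolding orbit_nbhd_def x_def using c(1) g_in_base_nbhd[OF c(2)]
    by (intro CollectI exI[of _ c] exI[of _ "g (lin (inverse c) y)"]) simp
  moreover have "y = linearizer x"
    using c by (simp add: x_def linearizer_equivariant linearizer_g_circ lin_inverse_right)
  ultimately show "y \<in> linearizer ` orbit_nbhd" by (rule rev_image_eqI)
qed

lemma inj_on_linearizer_orbit_nbhd: "inj_on linearizer orbit_nbhd"
proof (rule inj_onI)
  fix x1 x2 assume "x1 \<in> orbit_nbhd" "x2 \<in> orbit_nbhd" and eq: "linearizer x1 = linearizer x2"
  then obtain a u b y where a: "a \<noteq> 0" "u \<in> base_nbhd" "x1 = \<phi> a u"
    and b: "b \<noteq> 0" "y \<in> base_nbhd" "x2 = \<phi> b y"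
    by (auto simp: orbit_nbhd_def)
  have "lin a (linearizer u) = lin b (linearizer y)"
    using eq a b by (simp add: linearizer_equivariant)
  then have "linearizer u = lin (inverse a * b) (linearizer y)"
    using a(1) b(1) by (metis lin_inverse_left lin_mult_apply inverse_nonzero_iff_nonzero)
  then have "u = \<phi> (inverse a * b) y" using a b by (intro orbit_injective) auto
  moreover have "a * (inverse a * b) = b" using a(1) by simp
  ultimately show "x1 = x2" using a b by (metis phi_mult inverse_nonzero_iff_nonzero mult_eq_0_iff)
qed

lemma open_orbit_nbhd: "open orbit_nbhd"
proof -
  have "orbit_nbhd = (\<Union>c\<in>- {0}. \<phi> (inverse c) -` base_nbhd)"
    using mem_orbit_nbhd_iff by auto
  also have "open \<dots>"
    by (intro open_UN ballI open_vimage open_base_nbhd continuous_on_phi_slice) auto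
  finally show ?thesis .
qed

lemma p_in_orbit_nbhd: "p \<in> orbit_nbhd"
  unfolding orbit_nbhd_def using p_in_base_nbhd by (intro CollectI exI[of _ 1] exI[of _ p]) simp

lemma orbit_nbhd_invariant:
  assumes z: "z \<noteq> 0" and "x \<in> orbit_nbhd"
  shows "\<phi> z x \<in> orbit_nbhd"
proof -
  obtain c u where "c \<noteq> 0" "u \<in> base_nbhd" "x = \<phi> c u"
    using assms(2) by (auto simp: orbit_nbhd_def)
  moreover from this z have "\<phi> z x = \<phi> (z * c) u" "z * c \<noteq> 0" by (simp_all add: phi_mult)
  ultimately show ?thesis unfolding orbit_nbhd_def by blast
qed

lemma open_linearizer_orbit_nbhd: "open (linearizer ` orbit_nbhd)"
proof -
  have "linearizer ` orbit_nbhd = (\<Union>c\<in>- {0}. lin (inverse c) -` circ_polydisc)"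
    by (intro set_eqI) (auto simp: mem_linearizer_orbit_nbhd_iff)
  also have "open \<dots>"
    by (intro open_UN ballI open_vimage open_circ_polydisc continuous_intros)
  finally show ?thesis .
qed

lemma holo_vec_inverse_linearizer: "holo_vec (linearizer ` orbit_nbhd) (the_inv_into orbit_nbhd linearizer)"
  unfolding holo_vec_def
proof
  fix y0 assume "y0 \<in> linearizer ` orbit_nbhd"
  then obtain c where c: "c \<noteq> 0" "lin (inverse c) y0 \<in> circ_polydisc"
    using mem_linearizer_orbit_nbhd_iff by blast
  define N where "N = lin (inverse c) -` circ_polydisc"
  define H where "H y = \<phi> c (g (lin (inverse c) y))" for y
  define w0 where "w0 = lin (inverse c) y0"
  have N: "open N" "y0 \<in> N"
    using c by (auto simp: N_def intro!: open_vimage open_circ_polydisc continuous_intros)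
  have H_eq: "H y = the_inv_into orbit_nbhd linearizer y" if "y \<in> N" for y
  proof -
    have y: "lin (inverse c) y \<in> circ_polydisc" using that by (simp add: N_def)
    then have "H y \<in> orbit_nbhd"
      unfolding H_def orbit_nbhd_def using c(1) g_in_base_nbhd by blast
    moreover have "linearizer (H y) = y"
      using c(1) y by (simp add: H_def linearizer_equivariant linearizer_g_circ lin_inverse_right)
    ultimately show ?thesis by (metis inj_on_linearizer_orbit_nbhd the_inv_into_f_f)
  qed
  have w0: "w0 \<in> V0" using c circ_polydisc_subset_V0 by (auto simp: w0_def)
  have "(lin (inverse c) has_derivative lin (inverse c)) (at y0)"
    by (rule bounded_linear_imp_has_derivative[OF blinfun.bounded_linear_right])
  then have "(g \<circ> lin (inverse c) has_derivative g' w0 \<circ> lin (inverse c)) (at y0)"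
    by (rule diff_chain_at) (use has_derivative_g[OF w0] in \<open>simp add: w0_def\<close>)
  then have "(\<phi> c \<circ> (g \<circ> lin (inverse c)) has_derivative
      Dx c (g w0) \<circ> (g' w0 \<circ> lin (inverse c))) (at y0)"
    by (rule diff_chain_at) (use has_derivative_Dx[OF c(1)] in \<open>simp add: w0_def\<close>)
  then have "(H has_derivative (\<lambda>v. Dx c (g w0) (g' w0 (lin (inverse c) v)))) (at y0)"
    by (simp add: H_def[abs_def] o_def)
  then have der: "(the_inv_into orbit_nbhd linearizer has_derivative
      (\<lambda>v. Dx c (g w0) (g' w0 (lin (inverse c) v)))) (at y0)"
    by (rule has_derivative_transform_within_open[OF _ N]) (rule H_eq)
  show "\<exists>L. (the_inv_into orbit_nbhd linearizer has_derivative L) (at y0) \<and>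
      (\<forall>(a::complex) v. L (a *s v) = a *s L v)"
  proof (intro exI[of _ "\<lambda>v. Dx c (g w0) (g' w0 (lin (inverse c) v))"] conjI allI)
    show "Dx c (g w0) (g' w0 (lin (inverse c) (a *s v))) =
        a *s Dx c (g w0) (g' w0 (lin (inverse c) v))" for a v
      using c w0 by (simp add: lin_smult g'_smult Dx_smult)
  qed (rule der)
qed

end

context Cstar_action_fixed_point
begin

lemma linearizer_biholomorphic_on_invariant_domain:
  "\<exists>W. open W \<and> p \<in> W \<and> (\<forall>z x. z \<noteq> 0 \<longrightarrow> x \<in> W \<longrightarrow> \<phi> z x \<in> W) \<and>
     inj_on linearizer W \<and> open (linearizer ` W) \<and>
     (\<exists>G. holo_vec (linearizer ` W) G \<and> (\<forall>x\<in>W. G (linearizer x) = x))"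
proof -
  have "id_blinfun o\<^sub>L linearizer_deriv p = id_blinfun"
    by (intro blinfun_eqI) (simp add: linearizer_deriv_fixed_point)
  then obtain U0 V0 g g' where IFT: "open U0" "U0 \<subseteq> UNIV" "p \<in> U0" "open V0" "linearizer p \<in> V0"
    "homeomorphism U0 V0 linearizer g"
    "\<And>y. y \<in> V0 \<Longrightarrow> (g has_derivative g' y) (at y)"
    "\<And>y. y \<in> V0 \<Longrightarrow> g' y = inv (linearizer_deriv (g y))"
    "\<And>y. y \<in> V0 \<Longrightarrow> bij (linearizer_deriv (g y))"
    by (rule inverse_function_theorem[OF open_UNIV has_derivative_linearizer
        continuous_on_linearizer_deriv UNIV_I]) blast
  have "0 \<in> V0" using IFT(5) by (simp add: linearizer_fixed_point)
  then obtain r0 where r0: "0 < r0" "ball 0 r0 \<subseteq> V0"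
    using IFT(4) open_contains_ball by blast
  define r where "r = r0 / CARD('n)"
  have "polydisc r \<subseteq> V0"
    using polydisc_subset_ball[of r, where 'n='n] r0(2) by (simp add: r_def)
  moreover have "0 < r" using r0(1) by (simp add: r_def)
  ultimately interpret linearizer_local_inverse \<phi> p U0 V0 g g' r
    using IFT by unfold_locales auto
  show ?thesis
  proof (intro exI[of _ orbit_nbhd] conjI allI impI)
    show "\<exists>G. holo_vec (linearizer ` orbit_nbhd) G \<and> (\<forall>x\<in>orbit_nbhd. G (linearizer x) = x)"
      using holo_vec_inverse_linearizer the_inv_into_f_f[OF inj_on_linearizer_orbit_nbhd] by blast
  qed (simp_all add: open_orbit_nbhd p_in_orbit_nbhd orbit_nbhd_invariant
      inj_on_linearizer_orbit_nbhd open_linearizer_orbit_nbhd)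
qed

end

theorem theoremA:
  fixes \<phi> \<psi> :: "complex \<Rightarrow> complex^'n \<Rightarrow> complex^'n" and p :: "complex^'n"
  assumes "holo_Cstar_action \<phi>"
    and "\<forall>z. z \<noteq> 0 \<longrightarrow> \<phi> z p = p"
    and "\<forall>z. z \<noteq> 0 \<longrightarrow> (\<phi> z has_derivative \<psi> z) (at p)"
  shows "\<exists>F :: complex^'n \<Rightarrow> complex^'n.
           holo_vec UNIV F \<and> F p = 0 \<and>
           (\<forall>z. z \<noteq> 0 \<longrightarrow> \<psi> z \<circ> F = F \<circ> \<phi> z) \<and>
           (\<exists>W. open W \<and> p \<in> W \<and> (\<forall>z x. z \<noteq> 0 \<longrightarrow> x \<in> W \<longrightarrow> \<phi> z x \<in> W) \<and>
                inj_on F W \<and> open (F ` W) \<and>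
                (\<exists>G. holo_vec (F ` W) G \<and> (\<forall>x\<in>W. G (F x) = x)))"
proof -
  interpret Cstar_action_fixed_point \<phi> p
    using assms(1,2) by unfold_locales auto
  have "\<psi> z = lin z" if "z \<noteq> 0" for z
    using assms(3) that by (intro has_derivative_unique[OF _ has_derivative_lin]) auto
  then have "\<forall>z. z \<noteq> 0 \<longrightarrow> \<psi> z \<circ> linearizer = linearizer \<circ> \<phi> z"
    by (simp add: fun_eq_iff linearizer_equivariant)
  then show ?thesis
    using holo_vec_linearizer linearizer_fixed_point linearizer_biholomorphic_on_invariant_domain
    by blast
qed

end
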